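(* Let $S=\{\rho_1=0<\rho_2<\cdots\}$ be an Arf numerical semigroup with conductor $c=\rho_r$. Let $d$ be an odd integer with $1\le d\le 2r-3$, write $d=2t+1$, and put $p_t=c+\rho_{t+1}-1$. Then $$\{\rho\in[0,p_t]\cap S:\ \beta(\rho)\ge t+1\}=\{\rho_{t+1}+\rho_{t+1},\ \rho_{t+1}+\rho_{t+2},\ \dots,\ \rho_{t+1}+\rho_{r-1}\}.$$
   Context: A numerical semigroup is a submonoid $S$ of $(\mathbb{N}_0,+)$ with finite complement, with elements listed increasingly. $S$ is Arf if $\rho_i+\rho_j-\rho_k\in S$ for all positive integers $i\ge j\ge k$. The conductor $c$ is the smallest integer such that all integers $\ge c$ lie in $S$, with $c=\rho_r$. For $\rho\in S$: $A[\rho]=\{p\in S:\ \rho-p\in S\}$ and $\beta(\rho)=\max\{j\ge1:\ \rho_1,\dots,\rho_j\in A[\rho]\ \text{and}\ 2\rho_j\le\rho\}$. *)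

theory Defs
  imports Main "HOL-Library.Infinite_Set"
begin

definition numerical_semigroup :: "nat set \<Rightarrow> bool" where
  "numerical_semigroup S \<longleftrightarrow> 0 \<in> S \<and> (\<forall>a\<in>S. \<forall>b\<in>S. a + b \<in> S) \<and> finite (UNIV - S)"

text \<open>rho S i is the i-th element of S listed increasingly, 1-indexed (rho S 1 = 0).\<close>
definition rho :: "nat set \<Rightarrow> nat \<Rightarrow> nat" where
  "rho S i = enumerate S (i - 1)"

definition Arf :: "nat set \<Rightarrow> bool" where
  "Arf S \<longleftrightarrow> (\<forall>i j k. 1 \<le> k \<and> k \<le> j \<and> j \<le> i \<longrightarrow>
      int (rho S i) + int (rho S j) - int (rho S k) \<in> int ` S)"

definition conductor :: "nat set \<Rightarrow> nat" where
  "conductor S = (LEAST c. \<forall>n\<ge>c. n \<in> S)"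

text \<open>A[rho] = {p in S. rho - p in S} (integer difference, so p \<le> rho).\<close>
definition Aset :: "nat set \<Rightarrow> nat \<Rightarrow> nat set" where
  "Aset S x = {p \<in> S. p \<le> x \<and> x - p \<in> S}"

definition beta :: "nat set \<Rightarrow> nat \<Rightarrow> nat" where
  "beta S x = Max {j. 1 \<le> j \<and> (\<forall>i\<in>{1..j}. rho S i \<in> Aset S x) \<and> 2 * rho S j \<le> x}"

end

theory Submission
  imports Defs
begin

text \<open>For \<open>k \<ge> t + 1\<close> and \<open>i \<le> t + 1\<close>, the
  Arf property applied to \<open>\<rho>(i) \<le> \<rho>(t + 1) \<le> \<rho>(k)\<close> puts \<open>\<rho>(t + 1) + \<rho>(k) - \<rho>(i)\<close> in \<open>S\<close>,
  so \<open>\<beta>(\<rho>(t + 1) + \<rho>(k)) \<ge> t + 1\<close>. Conversely \<open>\<beta>(x) \<ge> t + 1\<close> makes \<open>x - \<rho>(t + 1)\<close> an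
  element of \<open>S\<close> that is at least \<open>\<rho>(t + 1)\<close>, i.e. \<open>x = \<rho>(t + 1) + \<rho>(k)\<close> with \<open>k \<ge> t + 1\<close>.
  The bound \<open>x \<le> c + \<rho>(t + 1) - 1\<close> then says exactly \<open>\<rho>(k) < \<rho>(r)\<close>, i.e. \<open>k \<le> r - 1\<close>.\<close>

lemma numerical_semigroup_infinite: "numerical_semigroup S \<Longrightarrow> infinite S"
proof
  assume "numerical_semigroup S" and "finite S"
  then have "finite (S \<union> (UNIV - S))"
    by (simp add: numerical_semigroup_def)
  then show False
    by simp
qed

lemma rho_in: "infinite S \<Longrightarrow> rho S i \<in> S"
  unfolding rho_def by (rule enumerate_in_set)

lemma rho_one: "0 \<in> S \<Longrightarrow> rho S 1 = 0"
  by (simp add: rho_def enumerate_0 Least_eq_0)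

lemma rho_less_iff:
  "infinite S \<Longrightarrow> 1 \<le> i \<Longrightarrow> 1 \<le> j \<Longrightarrow> rho S i < rho S j \<longleftrightarrow> i < j"
  unfolding rho_def by auto

lemma rho_le_iff:
  "infinite S \<Longrightarrow> 1 \<le> i \<Longrightarrow> 1 \<le> j \<Longrightarrow> rho S i \<le> rho S j \<longleftrightarrow> i \<le> j"
  unfolding rho_def by auto

lemma le_rho: "infinite S \<Longrightarrow> i - 1 \<le> rho S i"
  unfolding rho_def by (rule le_enumerate)

lemma obtain_rho_index:
  assumes "infinite S" and "y \<in> S"
  obtains k where "1 \<le> k" and "rho S k = y"
proof -
  obtain n where "y = enumerate S n"
    using range_enumerate[OF assms(1)] assms(2) by blast
  then show thesis
    using that[of "n + 1"] by (simp add: rho_def)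
qed

lemma beta_ge_iff:
  assumes "infinite S" and "0 \<in> S" and "x \<in> S"
  shows "t + 1 \<le> beta S x \<longleftrightarrow>
    (\<forall>i\<in>{1..t+1}. rho S i \<in> Aset S x) \<and> 2 * rho S (t + 1) \<le> x"
proof -
  define B where "B = {j. 1 \<le> j \<and> (\<forall>i\<in>{1..j}. rho S i \<in> Aset S x) \<and> 2 * rho S j \<le> x}"
  have beta_eq: "beta S x = Max B"
    unfolding beta_def B_def ..
  have "B \<subseteq> {..x + 1}"
  proof
    fix j
    assume "j \<in> B"
    then have "2 * rho S j \<le> x"
      by (simp add: B_def)
    then show "j \<in> {..x + 1}"
      using le_rho[OF assms(1), of j] by simp
  qed
  then have fin: "finite B"
    by (rule finite_subset) simp
  have "1 \<in> B"
    using assms rho_one[OF assms(2)] by (simp add: B_def Aset_def)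
  then have "B \<noteq> {}" by blast
  have downward_closed: "j \<in> B \<Longrightarrow> 1 \<le> i \<Longrightarrow> i \<le> j \<Longrightarrow> i \<in> B" for i j
    using rho_le_iff[OF assms(1), of i j] by (auto simp: B_def)
  show ?thesis
  proof
    assume "t + 1 \<le> beta S x"
    then have "t + 1 \<in> B"
      using downward_closed[OF Max_in[OF fin \<open>B \<noteq> {}\<close>]] beta_eq by simp
    then show "(\<forall>i\<in>{1..t+1}. rho S i \<in> Aset S x) \<and> 2 * rho S (t + 1) \<le> x"
      by (simp add: B_def)
  next
    assume "(\<forall>i\<in>{1..t+1}. rho S i \<in> Aset S x) \<and> 2 * rho S (t + 1) \<le> x"
    then have "t + 1 \<in> B"
      by (simp add: B_def)
    then show "t + 1 \<le> beta S x"
      using Max_ge[OF fin] beta_eq by simp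
  qed
qed

lemma Arf_rho_in_Aset:
  assumes "Arf S" and "infinite S" and "1 \<le> i" and "i \<le> j" and "j \<le> k"
  shows "rho S i \<in> Aset S (rho S j + rho S k)"
proof -
  have "int (rho S k) + int (rho S j) - int (rho S i) \<in> int ` S"
    using assms(1,3-5) unfolding Arf_def by blast
  then obtain z where z: "z \<in> S" "int z = int (rho S k) + int (rho S j) - int (rho S i)"
    by (metis imageE)
  have "rho S i \<le> rho S j"
    using rho_le_iff[OF assms(2)] assms(3,4) by simp
  with z have "rho S j + rho S k - rho S i = z"
    by linarith
  with z(1) \<open>rho S i \<le> rho S j\<close> show ?thesis
    by (simp add: Aset_def rho_in[OF assms(2)])
qed

text \<open>The case \<open>i = 1\<close> of the Arf property, as \<open>\<rho>(1) = 0\<close>.\<close>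
lemma Arf_add_rho_in:
  assumes "Arf S" and "infinite S" and "0 \<in> S" and "1 \<le> j" and "j \<le> k"
  shows "rho S j + rho S k \<in> S"
  using Arf_rho_in_Aset[OF assms(1,2), of 1 j k] assms(4,5) rho_one[OF assms(3)]
  by (simp add: Aset_def)

lemma beta_ge_imp_rho_sum:
  assumes "infinite S" and "0 \<in> S" and "x \<in> S" and "t + 1 \<le> beta S x"
  obtains k where "t + 1 \<le> k" and "x = rho S (t + 1) + rho S k"
proof -
  have "rho S (t + 1) \<in> Aset S x" and "2 * rho S (t + 1) \<le> x"
    using assms beta_ge_iff[OF assms(1-3), of t] by auto
  then have rest: "x - rho S (t + 1) \<in> S" "rho S (t + 1) \<le> x - rho S (t + 1)"
    by (auto simp: Aset_def)
  obtain k where k: "1 \<le> k" "rho S k = x - rho S (t + 1)"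
    using obtain_rho_index[OF assms(1) rest(1)] .
  have "t + 1 \<le> k"
    using rest(2) k rho_le_iff[OF assms(1)] rho_less_iff[OF assms(1), of k "t + 1"] by simp
  moreover have "x = rho S (t + 1) + rho S k"
    using rest k by simp
  ultimately show thesis
    using that by blast
qed

lemma Arf_beta_rho_sum:
  assumes "Arf S" and "infinite S" and "0 \<in> S" and "t + 1 \<le> k"
  shows "t + 1 \<le> beta S (rho S (t + 1) + rho S k)"
proof -
  have A: "\<forall>i\<in>{1..t+1}. rho S i \<in> Aset S (rho S (t + 1) + rho S k)"
    using Arf_rho_in_Aset[OF assms(1,2)] assms(4) by simp
  have "rho S (t + 1) + rho S k \<in> S"
    using Arf_add_rho_in[OF assms(1-3)] assms(4) by simp
  moreover have "2 * rho S (t + 1) \<le> rho S (t + 1) + rho S k"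
    using rho_le_iff[OF assms(2), of "t + 1" k] assms(4) by simp
  ultimately show ?thesis
    using A beta_ge_iff[OF assms(2,3)] by blast
qed

lemma Arf_beta_ge_set:
  assumes "Arf S" and "infinite S" and "0 \<in> S"
  shows "{x \<in> S. t + 1 \<le> beta S x} = {rho S (t + 1) + rho S k | k. t + 1 \<le> k}"
proof (intro set_eqI iffI)
  fix x
  assume "x \<in> {x \<in> S. t + 1 \<le> beta S x}"
  then show "x \<in> {rho S (t + 1) + rho S k | k. t + 1 \<le> k}"
    using beta_ge_imp_rho_sum[OF assms(2,3)] by blast
next
  fix x
  assume "x \<in> {rho S (t + 1) + rho S k | k. t + 1 \<le> k}"
  then obtain k where k: "t + 1 \<le> k" "x = rho S (t + 1) + rho S k"
    by blast
  have "x \<in> S"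
    using Arf_add_rho_in[OF assms, of "t + 1" k] k by simp
  then show "x \<in> {x \<in> S. t + 1 \<le> beta S x}"
    using Arf_beta_rho_sum[OF assms k(1)] k(2) by simp
qed

theorem mainTheorem14:
  fixes S :: "nat set" and r d t :: nat
  assumes "numerical_semigroup S" and "Arf S"
    and "1 \<le> r" and "rho S r = conductor S"
    and "odd d" and "1 \<le> d" and "int d \<le> 2 * int r - 3"
    and "d = 2 * t + 1"
  shows "{x \<in> {0 .. conductor S + rho S (t + 1) - 1} \<inter> S. t + 1 \<le> beta S x}
         = {rho S (t + 1) + rho S k | k. t + 1 \<le> k \<and> k \<le> r - 1}"
proof -
  have inf: "infinite S"
    using assms(1) by (rule numerical_semigroup_infinite)
  have "0 \<in> S"
    using assms(1) by (simp add: numerical_semigroup_def)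
  have "t + 1 < r"
    using assms(7,8) by linarith
  then have "0 < conductor S"
    using assms(4) rho_less_iff[OF inf, of 1 r] rho_one[OF \<open>0 \<in> S\<close>] by simp
  then have bound: "rho S (t + 1) + rho S k \<le> conductor S + rho S (t + 1) - 1 \<longleftrightarrow> k \<le> r - 1"
    if "t + 1 \<le> k" for k
    using that \<open>t + 1 < r\<close> assms(4) rho_less_iff[OF inf, of k r] by auto
  have "{x \<in> {0 .. conductor S + rho S (t + 1) - 1} \<inter> S. t + 1 \<le> beta S x}
      = {x \<in> S. t + 1 \<le> beta S x} \<inter> {..conductor S + rho S (t + 1) - 1}"
    by auto
  also have "\<dots> = {rho S (t + 1) + rho S k | k. t + 1 \<le> k} \<inter> {..conductor S + rho S (t + 1) - 1}"
    using Arf_beta_ge_set[OF assms(2) inf \<open>0 \<in> S\<close>] by simp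
  also have "\<dots> = {rho S (t + 1) + rho S k | k. t + 1 \<le> k \<and> k \<le> r - 1}"
    using bound by blast
  finally show ?thesis .
qed

end
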